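(* If $T$ is a tree, then $\gamma_{\rm i}(T)=\alpha(T)$.
   Context: $\alpha(T)$ is the independence number. Indicated domination game on a graph $G$: two players, Dominator and Staller, alternate. In each round Dominator indicates a vertex $v$ not yet dominated by the vertices previously selected by Staller (a vertex dominates itself and its neighbors), and Staller must select a vertex of the closed neighborhood $N[v]$, adding it to a set $D$. The game ends when $D$ is a dominating set of $G$. Dominator wants to minimize $|D|$ and Staller to maximize it; the size of $D$ under optimal play of both is the indicated domination number $\gamma_{\rm i}(G)$. *)

theory Defs
  imports Main
begin

definition graph :: "'a set \<Rightarrow> ('a \<Rightarrow> 'a \<Rightarrow> bool) \<Rightarrow> bool" where
  "graph V E \<longleftrightarrow> finite V \<and> (\<forall>x y. E x y \<longrightarrow> x \<in> V \<and> y \<in> V) \<and>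
     (\<forall>x y. E x y \<longrightarrow> E y x) \<and> (\<forall>x. \<not> E x x)"

definition connected_graph :: "'a set \<Rightarrow> ('a \<Rightarrow> 'a \<Rightarrow> bool) \<Rightarrow> bool" where
  "connected_graph V E \<longleftrightarrow> (\<forall>x\<in>V. \<forall>y\<in>V. E\<^sup>*\<^sup>* x y)"

definition is_cycle :: "('a \<Rightarrow> 'a \<Rightarrow> bool) \<Rightarrow> 'a list \<Rightarrow> bool" where
  "is_cycle E xs \<longleftrightarrow> length xs \<ge> 3 \<and> distinct xs \<and>
     (\<forall>i. Suc i < length xs \<longrightarrow> E (xs ! i) (xs ! Suc i)) \<and> E (last xs) (hd xs)"

definition tree :: "'a set \<Rightarrow> ('a \<Rightarrow> 'a \<Rightarrow> bool) \<Rightarrow> bool" where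
  "tree V E \<longleftrightarrow> graph V E \<and> V \<noteq> {} \<and> connected_graph V E \<and> (\<nexists>xs. is_cycle E xs)"

definition closed_nbhd :: "'a set \<Rightarrow> ('a \<Rightarrow> 'a \<Rightarrow> bool) \<Rightarrow> 'a \<Rightarrow> 'a set" where
  "closed_nbhd V E v = {u \<in> V. u = v \<or> E v u}"

definition dominated :: "'a set \<Rightarrow> ('a \<Rightarrow> 'a \<Rightarrow> bool) \<Rightarrow> 'a set \<Rightarrow> 'a \<Rightarrow> bool" where
  "dominated V E D v \<longleftrightarrow> (\<exists>u\<in>D. v \<in> closed_nbhd V E u)"

definition dominating_set :: "'a set \<Rightarrow> ('a \<Rightarrow> 'a \<Rightarrow> bool) \<Rightarrow> 'a set \<Rightarrow> bool" where
  "dominating_set V E D \<longleftrightarrow> D \<subseteq> V \<and> (\<forall>v\<in>V. dominated V E D v)"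

definition independent_set :: "'a set \<Rightarrow> ('a \<Rightarrow> 'a \<Rightarrow> bool) \<Rightarrow> 'a set \<Rightarrow> bool" where
  "independent_set V E S \<longleftrightarrow> S \<subseteq> V \<and> (\<forall>x\<in>S. \<forall>y\<in>S. \<not> E x y)"

definition independence_number :: "'a set \<Rightarrow> ('a \<Rightarrow> 'a \<Rightarrow> bool) \<Rightarrow> nat" where
  "independence_number V E = Max {card S | S. independent_set V E S}"

text \<open>Value of the indicated domination game from position D (the set of vertices
selected so far by Staller): the number of further moves under optimal play.
Dominator indicates an undominated vertex v (minimizing), Staller picks
u in N[v] (maximizing); each move adds a new vertex to D, so the fuel n
(number of moves still allowed) is sufficient once n >= |V|.\<close>

fun ind_game_val :: "'a set \<Rightarrow> ('a \<Rightarrow> 'a \<Rightarrow> bool) \<Rightarrow> nat \<Rightarrow> 'a set \<Rightarrow> nat" where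
  "ind_game_val V E 0 D = 0"
| "ind_game_val V E (Suc n) D =
     (if dominating_set V E D then 0
      else Min ((\<lambda>v. Max ((\<lambda>u. Suc (ind_game_val V E n (insert u D))) ` closed_nbhd V E v))
                 ` {v \<in> V. \<not> dominated V E D v}))"

definition indicated_domination_number :: "'a set \<Rightarrow> ('a \<Rightarrow> 'a \<Rightarrow> bool) \<Rightarrow> nat" where
  "indicated_domination_number V E = ind_game_val V E (card V) {}"

end

theory Submission
  imports Defs
begin

(* Lower bound, on every graph: let Staller answer an indicated vertex v with a vertex u of a
   maximum independent set I of the undominated vertices; I meets N[v] by maximality, and
   I - {u} stays independent and undominated.  So each move lowers the independence number of
   the undominated part by at most one.

   Upper bound, on a tree: root it and select, from the leaves up, every vertex none of whose
   children is selected; the selected vertices are independent.  Call a selected f settled once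
   f and its parent are dominated.  Dominator looks at a shallowest undominated vertex v and
   indicates v itself if v is selected or all selected children of v are dominated, and
   otherwise an undominated selected child c of v.  Every answer then settles a new selected
   vertex: v, c, or, if Staller answers with a child u of c, a selected child of u.  That last
   vertex is still undominated because Dominator's strategy keeps every chosen vertex at most
   two levels below every undominated one. *)

definition undominated :: "'a set \<Rightarrow> ('a \<Rightarrow> 'a \<Rightarrow> bool) \<Rightarrow> 'a set \<Rightarrow> 'a set" where
  "undominated V E D = {v \<in> V. \<not> dominated V E D v}"

definition induced_independence_number :: "'a set \<Rightarrow> ('a \<Rightarrow> 'a \<Rightarrow> bool) \<Rightarrow> 'a set \<Rightarrow> nat"
  where
  "induced_independence_number V E W = Max {card S | S. S \<subseteq> W \<and> independent_set V E S}"

lemma closed_nbhd_iff: "u \<in> closed_nbhd V E v \<longleftrightarrow> u \<in> V \<and> (u = v \<or> E v u)"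
  unfolding closed_nbhd_def by auto

lemma finite_closed_nbhd: "finite V \<Longrightarrow> finite (closed_nbhd V E v)"
  unfolding closed_nbhd_def by simp

lemma dominated_insert:
  "dominated V E (insert u D) x \<longleftrightarrow> dominated V E D x \<or> x \<in> closed_nbhd V E u"
  unfolding dominated_def by auto

lemma dominated_insert_closed_nbhd:
  assumes "graph V E" "v \<in> V" "u \<in> closed_nbhd V E v"
  shows "dominated V E (insert u D) v"
proof -
  have "E v u \<Longrightarrow> E u v" using assms(1) by (simp add: graph_def)
  then show ?thesis using assms(2,3) by (auto simp: dominated_insert closed_nbhd_iff)
qed

lemma undominated_insert_subset: "undominated V E (insert u D) \<subseteq> undominated V E D"
  unfolding undominated_def by (auto simp: dominated_insert)

lemma undominated_empty: "undominated V E {} = V"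
  unfolding undominated_def dominated_def by simp

lemma dominating_set_iff_undominated_empty:
  "D \<subseteq> V \<Longrightarrow> dominating_set V E D \<longleftrightarrow> undominated V E D = {}"
  unfolding dominating_set_def undominated_def by auto

lemma ind_game_val_Suc_le:
  assumes "finite V" "v \<in> undominated V E D"
    and "\<And>u. u \<in> closed_nbhd V E v \<Longrightarrow> Suc (ind_game_val V E n (insert u D)) \<le> k"
  shows "ind_game_val V E (Suc n) D \<le> k"
proof (cases "dominating_set V E D")
  case False
  let ?replies = "\<lambda>v. (\<lambda>u. Suc (ind_game_val V E n (insert u D))) ` closed_nbhd V E v"
  have "v \<in> closed_nbhd V E v" using assms(2) by (simp add: closed_nbhd_iff undominated_def)
  then have "Max (?replies v) \<le> k"
    using assms(1,3) by (subst Max_le_iff) (auto simp: finite_closed_nbhd)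
  moreover have "Min ((\<lambda>v. Max (?replies v)) ` undominated V E D) \<le> Max (?replies v)"
    using assms(1,2) by (intro Min_le) (auto simp: undominated_def)
  ultimately show ?thesis using False by (simp add: undominated_def)
qed simp

lemma ind_game_val_Suc_ge:
  assumes "finite V" "undominated V E D \<noteq> {}"
    and "\<And>v. v \<in> undominated V E D \<Longrightarrow>
           \<exists>u\<in>closed_nbhd V E v. k \<le> Suc (ind_game_val V E n (insert u D))"
  shows "k \<le> ind_game_val V E (Suc n) D"
proof -
  let ?replies = "\<lambda>v. (\<lambda>u. Suc (ind_game_val V E n (insert u D))) ` closed_nbhd V E v"
  have "\<not> dominating_set V E D"
    using assms(2) by (auto simp: dominating_set_def undominated_def)
  moreover have "k \<le> Max (?replies v)" if "v \<in> undominated V E D" for v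
    using assms(1) assms(3)[OF that] by (subst Max_ge_iff) (auto simp: finite_closed_nbhd)
  then have "k \<le> Min ((\<lambda>v. Max (?replies v)) ` undominated V E D)"
    using assms(1,2) by (subst Min_ge_iff) (auto simp: undominated_def)
  ultimately show ?thesis by (simp add: undominated_def)
qed

lemma finite_independent_cards:
  assumes "finite V"
  shows "finite {card S | S. S \<subseteq> W \<and> independent_set V E S}"
proof (rule finite_subset)
  show "{card S | S. S \<subseteq> W \<and> independent_set V E S} \<subseteq> {..card V}"
    using assms by (auto simp: independent_set_def intro: card_mono)
qed simp

lemma card_le_induced_independence_number:
  assumes "finite V" "S \<subseteq> W" "independent_set V E S"
  shows "card S \<le> induced_independence_number V E W"
  unfolding induced_independence_number_def
  using assms finite_independent_cards[OF assms(1)] by (intro Max_ge) auto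

lemma induced_independence_number_attained:
  assumes "finite V"
  obtains S where "S \<subseteq> W" "independent_set V E S" "card S = induced_independence_number V E W"
proof -
  let ?cards = "{card S | S. S \<subseteq> W \<and> independent_set V E S}"
  have "independent_set V E {}" by (simp add: independent_set_def)
  then have "card {} \<in> ?cards" by (intro CollectI exI[of _ "{}"]) simp
  then have "Max ?cards \<in> ?cards" using finite_independent_cards[OF assms] by (intro Max_in) auto
  then obtain S where "S \<subseteq> W" "independent_set V E S" "Max ?cards = card S" by blast
  then show ?thesis using that unfolding induced_independence_number_def by simp
qed

lemma induced_independence_number_empty:
  assumes "finite V"
  shows "induced_independence_number V E {} = 0"
  by (rule induced_independence_number_attained[OF assms, of "{}" E]) simp

lemma induced_independence_number_vertices:
  "induced_independence_number V E V = independence_number V E"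
proof -
  have "S \<subseteq> V \<and> independent_set V E S \<longleftrightarrow> independent_set V E S" for S
    by (auto simp: independent_set_def)
  then show ?thesis
    unfolding induced_independence_number_def independence_number_def by simp
qed

lemma maximum_independent_meets_closed_nbhd:
  assumes "graph V E" "I \<subseteq> W" "independent_set V E I"
    and "card I = induced_independence_number V E W" "v \<in> W" "v \<in> V"
  shows "I \<inter> closed_nbhd V E v \<noteq> {}"
proof
  assume disjoint: "I \<inter> closed_nbhd V E v = {}"
  have "finite V" and sym: "\<And>x y. E x y \<Longrightarrow> E y x" and irrefl: "\<And>x. \<not> E x x"
    using assms(1) by (auto simp: graph_def)
  have "\<not> E v x" "\<not> E x v" if "x \<in> I" for x
  proof -
    have "x \<in> V" "x \<notin> closed_nbhd V E v"
      using that disjoint assms(3) by (auto simp: independent_set_def)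
    then show "\<not> E v x" "\<not> E x v" using sym by (auto simp: closed_nbhd_iff)
  qed
  then have "independent_set V E (insert v I)"
    using assms(3,6) irrefl by (auto simp: independent_set_def)
  then have "card (insert v I) \<le> card I"
    using card_le_induced_independence_number[OF \<open>finite V\<close>, of "insert v I" W] assms(2,4,5)
    by simp
  moreover have "finite I"
    using assms(3) \<open>finite V\<close> by (auto simp: independent_set_def intro: finite_subset)
  moreover have "v \<notin> I"
    using assms(6) disjoint by (auto simp: closed_nbhd_iff)
  ultimately show False by simp
qed

lemma card_undominated_insert_less:
  assumes "graph V E" "v \<in> undominated V E D" "u \<in> closed_nbhd V E v"
  shows "card (undominated V E (insert u D)) < card (undominated V E D)"
proof (rule psubset_card_mono)
  have "v \<in> V" using assms(2) by (simp add: undominated_def)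
  show "finite (undominated V E D)" using assms(1) by (simp add: graph_def undominated_def)
  show "undominated V E (insert u D) \<subset> undominated V E D"
    using undominated_insert_subset[of V E u D] assms(2)
      dominated_insert_closed_nbhd[OF assms(1) \<open>v \<in> V\<close> assms(3), of D]
    by (auto simp: undominated_def)
qed

lemma independent_Diff_subset_undominated_insert:
  assumes "I \<subseteq> undominated V E D" "independent_set V E I" "u \<in> I"
  shows "I - {u} \<subseteq> undominated V E (insert u D)"
  using assms by (auto simp: undominated_def dominated_insert independent_set_def closed_nbhd_iff)

lemma staller_lower_bound:
  assumes "graph V E" "card (undominated V E D) \<le> n"
  shows "induced_independence_number V E (undominated V E D) \<le> ind_game_val V E n D"
  using assms(2)
proof (induction n arbitrary: D)
  case 0
  have "finite V" using assms(1) by (simp add: graph_def)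
  then have "undominated V E D = {}" using 0 by (simp add: undominated_def)
  then show ?case using induced_independence_number_empty[OF \<open>finite V\<close>] by simp
next
  case (Suc n)
  have "finite V" using assms(1) by (simp add: graph_def)
  let ?W = "undominated V E D"
  show ?case
  proof (cases "?W = {}")
    case True
    then show ?thesis using induced_independence_number_empty[OF \<open>finite V\<close>] by simp
  next
    case False
    obtain I where I: "I \<subseteq> ?W" "independent_set V E I" "card I = induced_independence_number V E ?W"
      using induced_independence_number_attained[OF \<open>finite V\<close>] .
    have "finite I" using I(1) \<open>finite V\<close> by (auto simp: undominated_def intro: finite_subset)
    show ?thesis
    proof (rule ind_game_val_Suc_ge[OF \<open>finite V\<close> False])
      fix v assume v: "v \<in> ?W"
      then have "v \<in> V" by (simp add: undominated_def)
      obtain u where u: "u \<in> I" "u \<in> closed_nbhd V E v"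
        using maximum_independent_meets_closed_nbhd[OF assms(1) I v \<open>v \<in> V\<close>] by blast
      let ?W' = "undominated V E (insert u D)"
      have "card ?W' \<le> n"
        using card_undominated_insert_less[OF assms(1) v u(2)] Suc.prems by simp
      then have "induced_independence_number V E ?W' \<le> ind_game_val V E n (insert u D)"
        by (rule Suc.IH)
      moreover have "card (I - {u}) \<le> induced_independence_number V E ?W'"
        using independent_Diff_subset_undominated_insert[OF I(1,2) u(1)] I(2) \<open>finite V\<close>
        by (intro card_le_induced_independence_number) (auto simp: independent_set_def)
      ultimately show "\<exists>u\<in>closed_nbhd V E v.
          induced_independence_number V E ?W \<le> Suc (ind_game_val V E n (insert u D))"
        using u I(3) card_Suc_Diff1[OF \<open>finite I\<close> u(1)] by (metis Suc_le_mono le_trans)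
    qed
  qed
qed

theorem independence_number_le_indicated_domination_number:
  assumes "graph V E"
  shows "independence_number V E \<le> indicated_domination_number V E"
  using staller_lower_bound[OF assms, of "{}" "card V"]
  by (simp add: undominated_empty induced_independence_number_vertices
      indicated_domination_number_def)

definition is_path :: "('a \<Rightarrow> 'a \<Rightarrow> bool) \<Rightarrow> 'a list \<Rightarrow> bool" where
  "is_path E xs \<longleftrightarrow> distinct xs \<and> (\<forall>i. Suc i < length xs \<longrightarrow> E (xs ! i) (xs ! Suc i))"

lemma is_path_snoc:
  assumes "is_path E xs" "xs \<noteq> []" "E (last xs) z" "z \<notin> set xs"
  shows "is_path E (xs @ [z])"
  unfolding is_path_def
proof (intro conjI allI impI)
  show "distinct (xs @ [z])" using assms(1,4) by (simp add: is_path_def)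
  fix i assume i: "Suc i < length (xs @ [z])"
  show "E ((xs @ [z]) ! i) ((xs @ [z]) ! Suc i)"
  proof (cases "Suc i < length xs")
    case True
    then show ?thesis using assms(1) by (simp add: is_path_def nth_append)
  next
    case False
    then have "i = length xs - 1" "Suc i = length xs" using i by auto
    then show ?thesis using assms(2,3) by (simp add: nth_append last_conv_nth)
  qed
qed

lemma is_cycle_drop_path:
  assumes "is_path E xs" "j + 3 \<le> length xs" "E (last xs) (xs ! j)"
  shows "is_cycle E (drop j xs)"
  unfolding is_cycle_def
proof (intro conjI allI impI)
  show "3 \<le> length (drop j xs)" "distinct (drop j xs)"
    using assms(1,2) by (auto simp: is_path_def)
  show "E (drop j xs ! i) (drop j xs ! Suc i)" if "Suc i < length (drop j xs)" for i
    using assms(1) that by (auto simp: is_path_def)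
  show "E (last (drop j xs)) (hd (drop j xs))"
    using assms(2,3) by (simp add: hd_drop_conv_nth)
qed

lemma acyclic_path_end_neighbour:
  assumes "graph V E" "\<nexists>ys. is_cycle E ys" "is_path E xs" "2 \<le> length xs"
    and "E (last xs) z" "z \<in> set xs"
  shows "z = xs ! (length xs - 2)"
proof -
  obtain j where j: "j < length xs" "z = xs ! j" using assms(6) by (auto simp: in_set_conv_nth)
  have "last xs = xs ! (length xs - 1)" using assms(4) by (intro last_conv_nth) auto
  moreover have "\<not> E z z" using assms(1) by (simp add: graph_def)
  ultimately have "j \<noteq> length xs - 1" using assms(5) j by auto
  moreover have "\<not> j + 3 \<le> length xs"
    using is_cycle_drop_path[OF assms(3)] assms(2,5) j by blast
  ultimately have "j = length xs - 2" using j(1) by linarith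
  then show ?thesis using j(2) by simp
qed

lemma acyclic_path_reaches_leaf:
  assumes "graph V E" "\<nexists>ys. is_cycle E ys" "is_path E xs" "2 \<le> length xs" "set xs \<subseteq> V"
  shows "\<exists>l s. E l s \<and> (\<forall>t. E l t \<longrightarrow> t = s)"
  using assms(3-5)
proof (induction "card V - length xs" arbitrary: xs rule: less_induct)
  case less
  have sym: "\<And>a b. E a b \<Longrightarrow> E b a" and edge_in: "\<And>a b. E a b \<Longrightarrow> b \<in> V"
    using assms(1) by (auto simp: graph_def)
  show ?case
  proof (cases "\<exists>z. E (last xs) z \<and> z \<notin> set xs")
    case True
    then obtain z where z: "E (last xs) z" "z \<notin> set xs" by blast
    have "xs \<noteq> []" using less.prems(2) by auto
    then have path: "is_path E (xs @ [z])" using is_path_snoc[OF less.prems(1) _ z] by simp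
    have "set (xs @ [z]) \<subseteq> V" using less.prems(3) edge_in[OF z(1)] by simp
    then have "card (set (xs @ [z])) \<le> card V"
      using assms(1) by (intro card_mono) (simp_all add: graph_def)
    then have "length (xs @ [z]) \<le> card V"
      using path distinct_card[of "xs @ [z]"] by (simp add: is_path_def)
    then show ?thesis
      using less.hyps[of "xs @ [z]"] path less.prems(2,3) edge_in[OF z(1)] by force
  next
    case False
    let ?s = "xs ! (length xs - 2)"
    have idx: "Suc (length xs - 2) < length xs" "Suc (length xs - 2) = length xs - 1"
      using less.prems(2) by auto
    have "E ?s (xs ! Suc (length xs - 2))" using less.prems(1) idx(1) unfolding is_path_def by blast
    moreover have "xs ! (length xs - 1) = last xs"
      using less.prems(2) by (intro last_conv_nth[symmetric]) auto
    ultimately have "E (last xs) ?s" using sym unfolding idx(2) by simp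
    then show ?thesis
      using acyclic_path_end_neighbour[OF assms(1,2) less.prems(1,2)] False by blast
  qed
qed

lemma acyclic_graph_has_leaf:
  assumes "graph V E" "\<nexists>ys. is_cycle E ys" "E x y"
  shows "\<exists>l s. E l s \<and> (\<forall>t. E l t \<longrightarrow> t = s)"
proof (rule acyclic_path_reaches_leaf[OF assms(1,2)])
  show "is_path E [x, y]" "set [x, y] \<subseteq> V"
    using assms(1,3) by (auto simp: is_path_def graph_def nth_Cons split: nat.split)
qed simp

lemma rtranclp_avoid_leaf:
  assumes "E\<^sup>*\<^sup>* x y" "x \<noteq> l" "s \<noteq> l" "\<And>t. E l t \<Longrightarrow> t = s" "\<And>t. E t l \<Longrightarrow> t = s"
  shows "(\<lambda>a b. E a b \<and> a \<noteq> l \<and> b \<noteq> l)\<^sup>*\<^sup>* x (if y = l then s else y)"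
  using assms(1)
proof (induction rule: rtranclp_induct)
  case (step y z)
  consider "z = l" "y = s" | "y = l" "z = s" | "y \<noteq> l" "z \<noteq> l"
    using step.hyps(2) assms(4,5) by blast
  then show ?case
  proof cases
    case 3
    then show ?thesis using step by (simp add: rtranclp.rtrancl_into_rtrancl)
  qed (use step.IH assms(3) in auto)
qed (simp add: assms(2))

lemma tree_remove_leaf:
  assumes "tree V E" "E l s" "\<And>t. E l t \<Longrightarrow> t = s"
  shows "tree (V - {l}) (\<lambda>a b. E a b \<and> a \<noteq> l \<and> b \<noteq> l)"
  unfolding tree_def
proof (intro conjI)
  have g: "graph V E" and con: "connected_graph V E" and acyclic: "\<nexists>xs. is_cycle E xs"
    using assms(1) by (auto simp: tree_def)
  have sym: "\<And>a b. E a b \<Longrightarrow> E b a" and "s \<in> V" "s \<noteq> l"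
    using g assms(2) by (auto simp: graph_def)
  show "graph (V - {l}) (\<lambda>a b. E a b \<and> a \<noteq> l \<and> b \<noteq> l)"
    using g by (auto simp: graph_def)
  show "V - {l} \<noteq> {}" using \<open>s \<in> V\<close> \<open>s \<noteq> l\<close> by blast
  show "connected_graph (V - {l}) (\<lambda>a b. E a b \<and> a \<noteq> l \<and> b \<noteq> l)"
    unfolding connected_graph_def
  proof (intro ballI)
    fix x y assume "x \<in> V - {l}" "y \<in> V - {l}"
    moreover from this have "E\<^sup>*\<^sup>* x y" using con by (simp add: connected_graph_def)
    ultimately show "(\<lambda>a b. E a b \<and> a \<noteq> l \<and> b \<noteq> l)\<^sup>*\<^sup>* x y"
      using rtranclp_avoid_leaf[of E x y l s] \<open>s \<noteq> l\<close> assms(3) sym by simp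
  qed
  show "\<nexists>xs. is_cycle (\<lambda>a b. E a b \<and> a \<noteq> l \<and> b \<noteq> l) xs"
    using acyclic unfolding is_cycle_def by auto
qed

locale rooted_graph =
  fixes V :: "'a set" and E :: "'a \<Rightarrow> 'a \<Rightarrow> bool" and root :: 'a
    and depth :: "'a \<Rightarrow> nat" and parent :: "'a \<Rightarrow> 'a"
  assumes graph: "graph V E"
    and root_in: "root \<in> V"
    and parent_edge: "\<And>x. x \<in> V \<Longrightarrow> x \<noteq> root \<Longrightarrow> E x (parent x)"
    and depth_parent: "\<And>x. x \<in> V \<Longrightarrow> x \<noteq> root \<Longrightarrow> depth x = Suc (depth (parent x))"
    and edge_parent: "\<And>x y. E x y \<Longrightarrow> x \<noteq> root \<and> y = parent x \<or> y \<noteq> root \<and> x = parent y"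

lemma tree_rooted:
  assumes "tree V E"
  shows "\<exists>root depth parent. rooted_graph V E root depth parent"
  using assms
proof (induction "card V" arbitrary: V E rule: less_induct)
  case less
  have g: "graph V E" and con: "connected_graph V E" and acyclic: "\<nexists>xs. is_cycle E xs"
    and "V \<noteq> {}"
    using less.prems by (auto simp: tree_def)
  then obtain r where "r \<in> V" by blast
  show ?case
  proof (cases "\<exists>x y. E x y")
    case False
    have "x = r" if "x \<in> V" for x
    proof -
      have "E\<^sup>*\<^sup>* r x" using con \<open>r \<in> V\<close> that by (simp add: connected_graph_def)
      then show ?thesis using False by (cases rule: rtranclp.cases) auto
    qed
    then have "rooted_graph V E r (\<lambda>_. 0) id"
      using g False \<open>r \<in> V\<close> by unfold_locales blast+
    then show ?thesis by blast
  next
    case True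
    then obtain l s where leaf: "E l s" "\<And>t. E l t \<Longrightarrow> t = s"
      using acyclic_graph_has_leaf[OF g acyclic] by blast
    have "l \<in> V" "finite V" using g leaf(1) by (auto simp: graph_def)
    then have "card (V - {l}) < card V" by (meson card_Diff1_less)
    then obtain r depth parent
      where "rooted_graph (V - {l}) (\<lambda>a b. E a b \<and> a \<noteq> l \<and> b \<noteq> l) r depth parent"
      using less.hyps tree_remove_leaf[OF less.prems leaf] by blast
    then interpret pruned: rooted_graph "V - {l}" "\<lambda>a b. E a b \<and> a \<noteq> l \<and> b \<noteq> l" r depth parent .
    have "\<And>a b. E a b \<Longrightarrow> E b a" "\<not> E l l" using g by (simp_all add: graph_def)
    then have "s \<noteq> l" "\<And>t. E t l \<Longrightarrow> t = s" using leaf by blast+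
    have "rooted_graph V E r (depth(l := Suc (depth s))) (parent(l := s))"
    proof
      show "graph V E" by (rule g)
      show "r \<in> V" using pruned.root_in by blast
      fix x assume "x \<in> V" "x \<noteq> r"
      then show "E x ((parent(l := s)) x)"
        and "(depth(l := Suc (depth s))) x = Suc ((depth(l := Suc (depth s))) ((parent(l := s)) x))"
        using pruned.parent_edge[of x] pruned.depth_parent[of x] leaf(1) \<open>s \<noteq> l\<close> by auto
    next
      fix x y assume "E x y"
      then show "x \<noteq> r \<and> y = (parent(l := s)) x \<or> y \<noteq> r \<and> x = (parent(l := s)) y"
        using pruned.edge_parent[of x y] pruned.root_in leaf(2) \<open>\<And>t. E t l \<Longrightarrow> t = s\<close> by auto
    qed
    then show ?thesis by blast
  qed
qed

context rooted_graph
begin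

lemma finite_vertices: "finite V"
  using graph by (simp add: graph_def)

lemma edge_sym: "E x y \<Longrightarrow> E y x"
  using graph by (simp add: graph_def)

definition children :: "'a \<Rightarrow> 'a set" where
  "children x = {c \<in> V. c \<noteq> root \<and> parent c = x}"

lemma child_in_vertices: "c \<in> children x \<Longrightarrow> c \<in> V"
  by (simp add: children_def)

lemma depth_child: "c \<in> children x \<Longrightarrow> depth c = Suc (depth x)"
  using depth_parent by (auto simp: children_def)

lemma edge_child: "c \<in> children x \<Longrightarrow> E c x"
  using parent_edge by (auto simp: children_def)

lemma edge_child_cases: "E x y \<Longrightarrow> x \<in> children y \<or> y \<in> children x"
  using edge_parent graph by (auto simp: children_def graph_def)

definition height :: nat where
  "height = Max (depth ` V)"

lemma depth_le_height: "x \<in> V \<Longrightarrow> depth x \<le> height"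
  using finite_vertices by (simp add: height_def)

lemma depth_less_height: "c \<in> children x \<Longrightarrow> depth x < height"
  using depth_le_height[OF child_in_vertices] depth_child by fastforce

primrec selected_within :: "nat \<Rightarrow> 'a \<Rightarrow> bool" where
  "selected_within 0 x = True"
| "selected_within (Suc k) x \<longleftrightarrow> (\<forall>c\<in>children x. \<not> selected_within k c)"

lemma selected_within_childless: "children x = {} \<Longrightarrow> selected_within k x"
  by (cases k) simp_all

lemma selected_within_stable:
  assumes "x \<in> V" "height - depth x \<le> k" "height - depth x \<le> k'"
  shows "selected_within k x = selected_within k' x"
  using assms
proof (induction k arbitrary: k' x)
  case 0
  then have "children x = {}" using depth_less_height by fastforce
  then show ?case by (simp add: selected_within_childless)
next
  case (Suc j)
  show ?case
  proof (cases "children x = {}")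
    case True
    then show ?thesis by (simp add: selected_within_childless)
  next
    case False
    then have "depth x < height" using depth_less_height by blast
    then obtain j' where j': "k' = Suc j'" using Suc.prems(3) by (cases k') auto
    have "selected_within j c = selected_within j' c" if "c \<in> children x" for c
      using Suc.prems j' depth_child[OF that] child_in_vertices[OF that] by (intro Suc.IH) auto
    then show ?thesis using j' by simp
  qed
qed

definition selected :: "'a \<Rightarrow> bool" where
  "selected = selected_within height"

lemma selected_iff: "x \<in> V \<Longrightarrow> selected x \<longleftrightarrow> (\<forall>c\<in>children x. \<not> selected c)"
  using selected_within_stable[of x height "Suc height"] by (simp add: selected_def)

lemma independent_selected: "independent_set V E {x \<in> V. selected x}"
  unfolding independent_set_def
proof (intro conjI ballI)
  fix x y assume "x \<in> {x \<in> V. selected x}" "y \<in> {x \<in> V. selected x}"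
  then show "\<not> E x y" using edge_child_cases[of x y] selected_iff by blast
qed blast

definition settled :: "'a set \<Rightarrow> 'a \<Rightarrow> bool" where
  "settled D f \<longleftrightarrow> dominated V E D f \<and> (f \<noteq> root \<longrightarrow> dominated V E D (parent f))"

definition unsettled :: "'a set \<Rightarrow> 'a set" where
  "unsettled D = {f \<in> V. selected f \<and> \<not> settled D f}"

definition shallow :: "'a set \<Rightarrow> bool" where
  "shallow D \<longleftrightarrow> (\<forall>x\<in>D. \<forall>y\<in>undominated V E D. depth x \<le> depth y + 2)"

definition good_indication :: "'a set \<Rightarrow> nat \<Rightarrow> 'a \<Rightarrow> bool" where
  "good_indication D d v \<longleftrightarrow> v \<in> undominated V E D \<and>
     (\<forall>u\<in>closed_nbhd V E v. depth u \<le> d + 2 \<and> (\<exists>f\<in>unsettled D. settled (insert u D) f))"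

lemma settled_insert: "settled D f \<Longrightarrow> settled (insert u D) f"
  by (auto simp: settled_def dominated_insert)

lemma card_unsettled_insert_less:
  assumes "f \<in> unsettled D" "settled (insert u D) f"
  shows "card (unsettled (insert u D)) < card (unsettled D)"
proof (rule psubset_card_mono)
  show "finite (unsettled D)" using finite_vertices by (simp add: unsettled_def)
  show "unsettled (insert u D) \<subset> unsettled D"
    using assms settled_insert by (auto simp: unsettled_def)
qed

lemma shallow_insert:
  assumes "shallow D" "\<And>y. y \<in> undominated V E D \<Longrightarrow> depth u \<le> depth y + 2"
  shows "shallow (insert u D)"
  using assms undominated_insert_subset[of V E u D] by (auto simp: shallow_def)

lemma closed_nbhd_depth_le: "u \<in> closed_nbhd V E v \<Longrightarrow> depth u \<le> Suc (depth v)"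
  using edge_child_cases[of v u] depth_child by (auto simp: closed_nbhd_iff)

lemma shallower_dominated:
  assumes "\<And>y. y \<in> undominated V E D \<Longrightarrow> depth v0 \<le> depth y" "z \<in> V" "depth z < depth v0"
  shows "dominated V E D z"
  using assms by (force simp: undominated_def)

lemma good_indication_selected:
  assumes v0: "v0 \<in> undominated V E D" "\<And>y. y \<in> undominated V E D \<Longrightarrow> depth v0 \<le> depth y"
    and "selected v0"
  shows "good_indication D (depth v0) v0"
  unfolding good_indication_def
proof (intro conjI ballI bexI)
  have "v0 \<in> V" using v0(1) by (simp add: undominated_def)
  fix u assume u: "u \<in> closed_nbhd V E v0"
  show "depth u \<le> depth v0 + 2" using closed_nbhd_depth_le[OF u] by simp
  show "v0 \<in> unsettled D"
    using v0(1) \<open>selected v0\<close> by (simp add: unsettled_def settled_def undominated_def)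
  have "dominated V E D (parent v0)" if "v0 \<noteq> root"
    using shallower_dominated[OF v0(2)] parent_edge[OF \<open>v0 \<in> V\<close> that]
      depth_parent[OF \<open>v0 \<in> V\<close> that] graph by (simp add: graph_def)
  then show "settled (insert u D) v0"
    using dominated_insert_closed_nbhd[OF graph \<open>v0 \<in> V\<close> u]
    by (simp add: settled_def dominated_insert)
qed (rule v0(1))

lemma good_indication_dominated_child:
  assumes v0: "v0 \<in> undominated V E D"
    and c: "c \<in> children v0" "selected c" "dominated V E D c"
  shows "good_indication D (depth v0) v0"
  unfolding good_indication_def
proof (intro conjI ballI bexI)
  have "v0 \<in> V" using v0 by (simp add: undominated_def)
  fix u assume u: "u \<in> closed_nbhd V E v0"
  show "depth u \<le> depth v0 + 2" using closed_nbhd_depth_le[OF u] by simp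
  show "c \<in> unsettled D"
    using v0 c by (auto simp: unsettled_def settled_def undominated_def children_def)
  show "settled (insert u D) c"
    using c dominated_insert_closed_nbhd[OF graph \<open>v0 \<in> V\<close> u]
    by (auto simp: settled_def dominated_insert children_def)
qed (rule v0)

lemma great_grandchild_undominated:
  assumes "shallow D" "v0 \<in> undominated V E D" "c \<in> children v0" "c \<in> undominated V E D"
    and "u \<in> children c" "e \<in> children u"
  shows "e \<in> undominated V E D"
proof -
  have "\<not> (x \<in> D \<and> e \<in> closed_nbhd V E x)" for x
  proof
    assume x: "x \<in> D \<and> e \<in> closed_nbhd V E x"
    have "depth x \<le> depth v0 + 2" using assms(1,2) x by (simp add: shallow_def)
    moreover have "depth e = depth v0 + 3" using assms(3,5,6) depth_child by simp
    ultimately have "E x e" using x by (auto simp: closed_nbhd_iff)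
    then have "x = u"
      using edge_child_cases[of x e] depth_child assms(6) \<open>depth x \<le> depth v0 + 2\<close>
        \<open>depth e = depth v0 + 3\<close> by (force simp: children_def)
    then have "dominated V E D c"
      using x edge_child[OF assms(5)] child_in_vertices[OF assms(3)]
      by (auto simp: dominated_def closed_nbhd_iff)
    then show False using assms(4) by (simp add: undominated_def)
  qed
  then show ?thesis
    using child_in_vertices[OF assms(6)] by (auto simp: undominated_def dominated_def)
qed

lemma good_indication_undominated_child:
  assumes "shallow D" and v0: "v0 \<in> undominated V E D"
    and c: "c \<in> children v0" "selected c" "c \<in> undominated V E D"
  shows "good_indication D (depth v0) c"
  unfolding good_indication_def
proof (rule conjI[OF c(3)], rule ballI)
  have "c \<in> V" "v0 \<in> V" using c(1) v0 by (auto simp: children_def undominated_def)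
  have "c \<in> unsettled D" using c(2,3) by (simp add: unsettled_def settled_def undominated_def)
  fix u assume u: "u \<in> closed_nbhd V E c"
  consider "u = c" | "u = v0" | "u \<in> children c"
    using u edge_child_cases[of c u] c(1) by (auto simp: closed_nbhd_iff children_def)
  then show "depth u \<le> depth v0 + 2 \<and> (\<exists>f\<in>unsettled D. settled (insert u D) f)"
  proof cases
    case 1
    then have "settled (insert u D) c"
      using c(1) edge_child[OF c(1)] \<open>c \<in> V\<close> \<open>v0 \<in> V\<close>
      by (auto simp: settled_def dominated_insert closed_nbhd_iff children_def)
    then show ?thesis using 1 depth_child[OF c(1)] \<open>c \<in> unsettled D\<close> by auto
  next
    case 2
    then have "settled (insert u D) c"
      using c(1) edge_sym[OF edge_child[OF c(1)]] \<open>c \<in> V\<close> \<open>v0 \<in> V\<close>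
      by (auto simp: settled_def dominated_insert closed_nbhd_iff children_def)
    then show ?thesis using 2 \<open>c \<in> unsettled D\<close> by auto
  next
    case 3
    then have "\<not> selected u" using selected_iff[OF \<open>c \<in> V\<close>] c(2) by blast
    then obtain e where e: "e \<in> children u" "selected e"
      using selected_iff child_in_vertices[OF 3] by blast
    have "e \<in> unsettled D"
      using great_grandchild_undominated[OF assms(1) v0 c(1) c(3) 3 e(1)] e(2)
      by (simp add: unsettled_def settled_def undominated_def)
    moreover have "settled (insert u D) e"
      using e(1) edge_sym[OF edge_child[OF e(1)]] child_in_vertices[OF 3] child_in_vertices[OF e(1)]
      by (auto simp: settled_def dominated_insert closed_nbhd_iff children_def)
    moreover have "depth u = depth v0 + 2" using c(1) 3 depth_child by simp
    ultimately show ?thesis by auto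
  qed
qed

lemma good_indication_exists:
  assumes "shallow D" "v0 \<in> undominated V E D" "\<And>y. y \<in> undominated V E D \<Longrightarrow> depth v0 \<le> depth y"
  shows "\<exists>v. good_indication D (depth v0) v"
proof (cases "selected v0")
  case True
  then show ?thesis using good_indication_selected[OF assms(2,3)] by blast
next
  case False
  then obtain c where c: "c \<in> children v0" "selected c"
    using selected_iff assms(2) by (auto simp: undominated_def)
  show ?thesis
  proof (cases "dominated V E D c")
    case True
    then show ?thesis using good_indication_dominated_child[OF assms(2) c] by blast
  next
    case False
    then have "c \<in> undominated V E D" using child_in_vertices[OF c(1)] by (simp add: undominated_def)
    then show ?thesis using good_indication_undominated_child[OF assms(1,2) c] by blast
  qed
qed

lemma dominator_upper_bound:
  assumes "D \<subseteq> V" "shallow D"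
  shows "ind_game_val V E n D \<le> card (unsettled D)"
  using assms
proof (induction n arbitrary: D)
  case (Suc n)
  show ?case
  proof (cases "undominated V E D = {}")
    case True
    then show ?thesis using Suc.prems(1) by (simp add: dominating_set_iff_undominated_empty)
  next
    case False
    then obtain v0 where v0: "v0 \<in> undominated V E D"
      and v0_min: "\<And>y. y \<in> undominated V E D \<Longrightarrow> depth v0 \<le> depth y"
      using ex_has_least_nat[of "\<lambda>v. v \<in> undominated V E D" _ depth] by blast
    obtain v where v: "good_indication D (depth v0) v"
      using good_indication_exists[OF Suc.prems(2) v0 v0_min] by blast
    show ?thesis
    proof (rule ind_game_val_Suc_le[OF finite_vertices])
      show "v \<in> undominated V E D" using v by (simp add: good_indication_def)
      fix u assume u: "u \<in> closed_nbhd V E v"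
      then obtain f where "depth u \<le> depth v0 + 2" "f \<in> unsettled D" "settled (insert u D) f"
        using v by (auto simp: good_indication_def)
      have "insert u D \<subseteq> V" using u Suc.prems(1) by (simp add: closed_nbhd_iff)
      moreover have "depth u \<le> depth y + 2" if "y \<in> undominated V E D" for y
        using v0_min[OF that] \<open>depth u \<le> depth v0 + 2\<close> by simp
      then have "shallow (insert u D)" by (rule shallow_insert[OF Suc.prems(2)])
      ultimately have "ind_game_val V E n (insert u D) \<le> card (unsettled (insert u D))"
        by (rule Suc.IH)
      also have "\<dots> < card (unsettled D)"
        using card_unsettled_insert_less \<open>f \<in> unsettled D\<close> \<open>settled (insert u D) f\<close> .
      finally show "Suc (ind_game_val V E n (insert u D)) \<le> card (unsettled D)" by simp
    qed
  qed
qed simp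

theorem indicated_domination_number_le_independence_number:
  "indicated_domination_number V E \<le> independence_number V E"
proof -
  have "indicated_domination_number V E \<le> card (unsettled {})"
    unfolding indicated_domination_number_def
    by (rule dominator_upper_bound) (simp_all add: shallow_def)
  also have "\<dots> \<le> card {x \<in> V. selected x}"
    using finite_vertices by (intro card_mono) (auto simp: unsettled_def)
  also have "\<dots> \<le> independence_number V E"
    using card_le_induced_independence_number[where W = V, OF finite_vertices _ independent_selected]
    by (simp add: induced_independence_number_vertices)
  finally show ?thesis .
qed

end

theorem theorem5p2:
  fixes V :: "'a set" and E :: "'a \<Rightarrow> 'a \<Rightarrow> bool"
  assumes "tree V E"
  shows "indicated_domination_number V E = independence_number V E"
proof -
  obtain root depth parent where "rooted_graph V E root depth parent"
    using tree_rooted[OF assms] by blast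
  then have "indicated_domination_number V E \<le> independence_number V E"
    by (rule rooted_graph.indicated_domination_number_le_independence_number)
  moreover have "graph V E" using assms by (simp add: tree_def)
  then have "independence_number V E \<le> indicated_domination_number V E"
    by (rule independence_number_le_indicated_domination_number)
  ultimately show ?thesis by (rule antisym)
qed

end
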